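(* Let $G$ be a graph with weight function $w:V(G)\to[0,1]$, and let $S$ be an even set in $G$. Let $f:2^S\to\mathbb{R}$ be given by $f(A)=-\alpha_{A,S}(G)$ for $A\subseteq S$. Then $f$ is submodular, i.e. $f(A)+f(B)\ge f(A\cup B)+f(A\cap B)$ for all $A,B\subseteq S$.
   Context: All graphs are finite and simple. Paths are induced paths; length is the number of edges; a path is even if its length is even. An even pair in $G$ is a pair $\{x,y\}$ of vertices such that every induced path in $G$ from $x$ to $y$ is even (in particular $x,y$ are non-adjacent). An even set is a set of vertices every two of which form an even pair (so even sets are independent). For $X\subseteq V(G)$, $w(X)=\sum_{x\in X}w(x)$. For an independent set $S$ and $A\subseteq S$, $\alpha_{A,S}(G)$ denotes the maximum of $w(I)$ over independent sets $I$ of $G$ with $I\cap S=A$. *)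

theory Defs
  imports Complex_Main
begin

definition simple_graph :: "'a set \<Rightarrow> ('a \<Rightarrow> 'a \<Rightarrow> bool) \<Rightarrow> bool" where
  "simple_graph V E \<longleftrightarrow> finite V \<and> (\<forall>x y. E x y \<longrightarrow> x \<in> V \<and> y \<in> V)
     \<and> (\<forall>x y. E x y \<longrightarrow> E y x) \<and> (\<forall>x. \<not> E x x)"

text \<open>Induced path given as the list of its vertices; its length is length p - 1.\<close>
definition induced_path :: "'a set \<Rightarrow> ('a \<Rightarrow> 'a \<Rightarrow> bool) \<Rightarrow> 'a list \<Rightarrow> bool" where
  "induced_path V E p \<longleftrightarrow> p \<noteq> [] \<and> set p \<subseteq> V \<and> distinct p
     \<and> (\<forall>i. Suc i < length p \<longrightarrow> E (p ! i) (p ! Suc i))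
     \<and> (\<forall>i j. i < length p \<and> j < length p \<and> Suc i < j \<longrightarrow> \<not> E (p ! i) (p ! j))"

definition even_pair :: "'a set \<Rightarrow> ('a \<Rightarrow> 'a \<Rightarrow> bool) \<Rightarrow> 'a \<Rightarrow> 'a \<Rightarrow> bool" where
  "even_pair V E x y \<longleftrightarrow> x \<in> V \<and> y \<in> V \<and> x \<noteq> y \<and>
     (\<forall>p. induced_path V E p \<and> hd p = x \<and> last p = y \<longrightarrow> even (length p - 1))"

definition even_set :: "'a set \<Rightarrow> ('a \<Rightarrow> 'a \<Rightarrow> bool) \<Rightarrow> 'a set \<Rightarrow> bool" where
  "even_set V E S \<longleftrightarrow> S \<subseteq> V \<and> (\<forall>x\<in>S. \<forall>y\<in>S. x \<noteq> y \<longrightarrow> even_pair V E x y)"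

definition independent :: "'a set \<Rightarrow> ('a \<Rightarrow> 'a \<Rightarrow> bool) \<Rightarrow> 'a set \<Rightarrow> bool" where
  "independent V E I \<longleftrightarrow> I \<subseteq> V \<and> (\<forall>x\<in>I. \<forall>y\<in>I. \<not> E x y)"

definition alpha_AS :: "'a set \<Rightarrow> ('a \<Rightarrow> 'a \<Rightarrow> bool) \<Rightarrow> ('a \<Rightarrow> real) \<Rightarrow> 'a set \<Rightarrow> 'a set \<Rightarrow> real" where
  "alpha_AS V E w A S = Max {sum w I | I. independent V E I \<and> I \<inter> S = A}"

end

theory Submission
  imports Defs
begin

text \<open>
  Take independent sets \<open>J\<^sub>A\<close>, \<open>J\<^sub>B\<close> attaining \<open>\<alpha>\<^sub>A\<^sub>,\<^sub>S\<close> and \<open>\<alpha>\<^sub>B\<^sub>,\<^sub>S\<close>.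
  The graph induced on \<open>J\<^sub>A \<triangle> J\<^sub>B\<close> is bipartite with sides \<open>J\<^sub>A - J\<^sub>B\<close> and
  \<open>J\<^sub>B - J\<^sub>A\<close>, so an induced path in it from \<open>A - B\<close> to \<open>B - A\<close> would be odd, which
  the evenness of \<open>S\<close> forbids. Hence the union \<open>C\<close> of the components meeting \<open>A - B\<close>
  avoids \<open>B - A\<close>, and exchanging \<open>J\<^sub>A\<close> and \<open>J\<^sub>B\<close> on \<open>C\<close> gives independent
  sets meeting \<open>S\<close> in \<open>A \<union> B\<close> and \<open>A \<inter> B\<close> of the same total weight.
\<close>

definition walk :: "'a set \<Rightarrow> ('a \<Rightarrow> 'a \<Rightarrow> bool) \<Rightarrow> 'a list \<Rightarrow> bool" where
  "walk D E p \<longleftrightarrow> p \<noteq> [] \<and> set p \<subseteq> D \<and> successively E p"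

lemma induced_path_iff_walk:
  "induced_path V E p \<longleftrightarrow> walk V E p \<and> distinct p
     \<and> (\<forall>i j. i < length p \<and> j < length p \<and> Suc i < j \<longrightarrow> \<not> E (p ! i) (p ! j))"
  by (auto simp: induced_path_def walk_def successively_conv_nth)

lemma induced_path_mono:
  "induced_path D E p \<Longrightarrow> D \<subseteq> V \<Longrightarrow> induced_path V E p"
  unfolding induced_path_def by blast

lemma walk_remove_segment:
  assumes "walk D E (xs @ ys @ zs)" "xs = [] \<or> zs = [] \<or> E (last xs) (hd zs)" "xs @ zs \<noteq> []"
  shows "walk D E (xs @ zs)"
  using assms by (auto simp: walk_def successively_append_iff)

lemma list_split_at_two_positions:
  assumes "i < j" "j < length p"
  shows "p = take i p @ p ! i # drop (Suc i) (take j p) @ p ! j # drop (Suc j) p"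
proof -
  have "p = take j p @ p ! j # drop (Suc j) p"
    using id_take_nth_drop assms(2) by blast
  also have "take j p = take i p @ p ! i # drop (Suc i) (take j p)"
    using id_take_nth_drop[of i "take j p"] assms by simp
  finally show ?thesis by simp
qed

text \<open>A shortest walk has neither a repeated vertex nor a chord: either would give a shortcut.\<close>

lemma walk_imp_induced_path:
  assumes "walk D E p"
  obtains q where "induced_path D E q" "hd q = hd p" "last q = last p"
proof -
  let ?W = "\<lambda>q. walk D E q \<and> hd q = hd p \<and> last q = last p"
  obtain q where q: "?W q" and shortest: "\<And>q'. ?W q' \<Longrightarrow> length q \<le> length q'"
    using ex_has_least_nat[of ?W p length] assms by blast
  have "distinct q"
  proof (rule ccontr)
    assume "\<not> distinct q"
    then obtain xs y ys zs where split: "q = xs @ (y # ys) @ (y # zs)"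
      using not_distinct_decomp by fastforce
    have "xs = [] \<or> E (last xs) y"
      using q split by (auto simp: walk_def successively_append_iff)
    then have "?W (xs @ y # zs)"
      using walk_remove_segment[of D E xs "y # ys" "y # zs"] q split by (auto simp: hd_append)
    then show False
      using shortest split by fastforce
  qed
  moreover have "\<not> E (q ! i) (q ! j)" if "i < length q" "j < length q" "Suc i < j" for i j
  proof
    assume chord: "E (q ! i) (q ! j)"
    define xs where "xs = take i q @ [q ! i]"
    define ys where "ys = drop (Suc i) (take j q)"
    define zs where "zs = q ! j # drop (Suc j) q"
    have split: "q = xs @ ys @ zs"
      using list_split_at_two_positions[of i j q] that unfolding xs_def ys_def zs_def by simp
    have "xs \<noteq> []" "ys \<noteq> []" "zs \<noteq> []" "E (last xs) (hd zs)"
      using that chord unfolding xs_def ys_def zs_def by simp_all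
    then have "?W (xs @ zs)"
      using walk_remove_segment[of D E xs ys zs] q split by simp
    then show False
      using shortest split \<open>ys \<noteq> []\<close> by fastforce
  qed
  ultimately have "induced_path D E q"
    using q by (auto simp: induced_path_iff_walk)
  with q that show ?thesis by blast
qed

definition induced_adj :: "'a set \<Rightarrow> ('a \<Rightarrow> 'a \<Rightarrow> bool) \<Rightarrow> 'a \<Rightarrow> 'a \<Rightarrow> bool" where
  "induced_adj D E u v \<longleftrightarrow> E u v \<and> u \<in> D \<and> v \<in> D"

lemma rtranclp_induced_adj_walk:
  assumes "(induced_adj D E)\<^sup>*\<^sup>* x y" "x \<in> D"
  obtains p where "walk D E p" "hd p = x" "last p = y"
proof -
  from assms have "\<exists>p. walk D E p \<and> hd p = x \<and> last p = y"
  proof (induction rule: rtranclp_induct)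
    case base
    then show ?case by (intro exI[of _ "[x]"]) (simp add: walk_def)
  next
    case (step y z)
    then obtain p where "walk D E p" "hd p = x" "last p = y" by blast
    with step.hyps(2) have "walk D E (p @ [z]) \<and> hd (p @ [z]) = x \<and> last (p @ [z]) = z"
      by (auto simp: walk_def induced_adj_def successively_append_iff)
    then show ?case by blast
  qed
  with that show ?thesis by blast
qed

lemma walk_alternating_parity:
  assumes "walk (X \<union> Y) E p" "X \<inter> Y = {}" "hd p \<in> X"
    and "\<forall>u\<in>X. \<forall>v\<in>X. \<not> E u v" "\<forall>u\<in>Y. \<forall>v\<in>Y. \<not> E u v"
  shows "last p \<in> X \<longleftrightarrow> odd (length p)"
  using assms
proof (induction p arbitrary: X Y)
  case Nil
  then show ?case by (simp add: walk_def)
next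
  case (Cons a p)
  show ?case
  proof (cases "p = []")
    case True
    with Cons.prems show ?thesis by simp
  next
    case False
    have "set p \<subseteq> X \<union> Y" using Cons.prems(1) by (simp add: walk_def)
    then have ends: "hd p \<in> X \<union> Y" "last p \<in> X \<union> Y" using False hd_in_set last_in_set by blast+
    from False Cons.prems(1) have "walk (Y \<union> X) E p" "E a (hd p)"
      by (auto simp: walk_def successively_Cons)
    moreover have "hd p \<in> Y"
      using ends(1) Cons.prems(3,4) \<open>E a (hd p)\<close> by auto
    ultimately have "last p \<in> Y \<longleftrightarrow> odd (length p)"
      using Cons.IH[of Y X] Cons.prems by blast
    with ends(2) Cons.prems(2) False show ?thesis by auto
  qed
qed

lemma even_set_independent:
  assumes "simple_graph V E" "even_set V E S"
  shows "independent V E S"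
  unfolding independent_def
proof (intro conjI ballI notI)
  show "S \<subseteq> V" using assms(2) by (simp add: even_set_def)
  fix x y assume "x \<in> S" "y \<in> S" "E x y"
  moreover have "x \<noteq> y"
    using assms(1) \<open>E x y\<close> by (auto simp: simple_graph_def)
  ultimately have "even_pair V E x y"
    using assms(2) by (simp add: even_set_def)
  moreover have "induced_path V E [x, y]"
    using assms(1) \<open>E x y\<close> \<open>x \<noteq> y\<close> by (auto simp: induced_path_def simple_graph_def less_Suc_eq)
  ultimately show False
    by (auto simp: even_pair_def)
qed

lemma independent_subset:
  "independent V E I \<Longrightarrow> J \<subseteq> I \<Longrightarrow> independent V E J"
  unfolding independent_def by blast

lemma finite_independent_weights:
  assumes "finite V"
  shows "finite {sum w I | I. independent V E I \<and> I \<inter> S = A}"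
proof -
  have "{sum w I | I. independent V E I \<and> I \<inter> S = A} \<subseteq> sum w ` Pow V"
    by (auto simp: independent_def)
  then show ?thesis
    using assms finite_subset by blast
qed

lemma alpha_AS_ge:
  assumes "finite V" "independent V E I" "I \<inter> S = A"
  shows "sum w I \<le> alpha_AS V E w A S"
  unfolding alpha_AS_def
  by (rule Max_ge[OF finite_independent_weights[OF assms(1)]]) (use assms(2,3) in blast)

lemma alpha_AS_attained:
  assumes "finite V" "independent V E I" "I \<inter> S = A"
  obtains J where "independent V E J" "J \<inter> S = A" "alpha_AS V E w A S = sum w J"
proof -
  have "alpha_AS V E w A S \<in> {sum w I | I. independent V E I \<and> I \<inter> S = A}"
    unfolding alpha_AS_def using finite_independent_weights[OF assms(1)] assms(2,3)
    by (intro Max_in) auto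
  with that show ?thesis by auto
qed

lemma even_set_not_reachable_in_sym_diff:
  assumes "even_set V E S" "independent V E J1" "independent V E J2"
    and x: "x \<in> J1 \<inter> S - J2" and y: "y \<in> J2 \<inter> S - J1"
  shows "\<not> (induced_adj (sym_diff J1 J2) E)\<^sup>*\<^sup>* x y"
proof
  assume "(induced_adj (sym_diff J1 J2) E)\<^sup>*\<^sup>* x y"
  moreover have "x \<in> sym_diff J1 J2" using x by simp
  ultimately obtain p where p: "walk (sym_diff J1 J2) E p" "hd p = x" "last p = y"
    by (rule rtranclp_induced_adj_walk)
  obtain q where q: "induced_path (sym_diff J1 J2) E q" "hd q = x" "last q = y"
    using walk_imp_induced_path[OF p(1)] p(2,3) by metis
  have "last q \<in> J1 - J2 \<longleftrightarrow> odd (length q)"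
  proof (rule walk_alternating_parity)
    show "walk (sym_diff J1 J2) E q"
      using q(1) by (simp add: induced_path_iff_walk)
    show "\<forall>u\<in>J1 - J2. \<forall>v\<in>J1 - J2. \<not> E u v" "\<forall>u\<in>J2 - J1. \<forall>v\<in>J2 - J1. \<not> E u v"
      using assms(2,3) unfolding independent_def by blast+
  qed (use x q(2) in blast)+
  then have "odd (length q - 1)"
    using y q(1,3) by (auto simp: induced_path_def)
  moreover have "sym_diff J1 J2 \<subseteq> V"
    using assms(2,3) unfolding independent_def by blast
  then have "induced_path V E q"
    using q(1) by (rule induced_path_mono[rotated])
  moreover have "even_pair V E x y"
    using assms(1) x y unfolding even_set_def by auto
  ultimately show False
    using q(2,3) unfolding even_pair_def by blast
qed

lemma even_set_separating_set:
  assumes "even_set V E S" "independent V E J1" "independent V E J2"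
  obtains C where "C \<subseteq> sym_diff J1 J2" "J1 \<inter> S - J2 \<subseteq> C" "C \<inter> (J2 \<inter> S - J1) = {}"
    and "\<And>u v. u \<in> C \<Longrightarrow> v \<in> sym_diff J1 J2 \<Longrightarrow> E u v \<Longrightarrow> v \<in> C"
proof -
  let ?R = "induced_adj (sym_diff J1 J2) E"
  define C where "C = {v. \<exists>a \<in> J1 \<inter> S - J2. ?R\<^sup>*\<^sup>* a v}"
  have seeds: "J1 \<inter> S - J2 \<subseteq> C"
    unfolding C_def by blast
  have "C \<subseteq> sym_diff J1 J2"
  proof
    fix v assume "v \<in> C"
    then obtain a where "?R\<^sup>*\<^sup>* a v" "a \<in> J1 \<inter> S - J2"
      unfolding C_def by blast
    then show "v \<in> sym_diff J1 J2"
      by (cases rule: rtranclp.cases) (auto simp: induced_adj_def)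
  qed
  moreover have "v \<in> C" if "u \<in> C" "v \<in> sym_diff J1 J2" "E u v" for u v
  proof -
    from \<open>u \<in> C\<close> obtain a where a: "a \<in> J1 \<inter> S - J2" and reach: "?R\<^sup>*\<^sup>* a u"
      unfolding C_def by blast
    have "?R u v"
      using that \<open>C \<subseteq> sym_diff J1 J2\<close> unfolding induced_adj_def by blast
    with reach have "?R\<^sup>*\<^sup>* a v"
      by (rule rtranclp.rtrancl_into_rtrancl)
    with a show "v \<in> C"
      unfolding C_def by blast
  qed
  moreover have "C \<inter> (J2 \<inter> S - J1) = {}"
    using even_set_not_reachable_in_sym_diff[OF assms] unfolding C_def by blast
  ultimately show ?thesis
    using that[OF _ seeds] by blast
qed

lemma independent_swap:
  assumes "symp E" "independent V E J1" "independent V E J2"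
    and "\<And>u v. u \<in> C \<Longrightarrow> v \<in> sym_diff J1 J2 \<Longrightarrow> E u v \<Longrightarrow> v \<in> C"
  shows "independent V E ((J1 \<inter> C) \<union> (J2 - C))"
  using assms unfolding independent_def symp_def by blast

lemma sum_swap:
  assumes "finite J1" "finite J2"
  shows "sum w ((J1 \<inter> C) \<union> (J2 - C)) + sum w ((J2 \<inter> C) \<union> (J1 - C)) = sum w J1 + sum w J2"
proof -
  have "sum w ((J1 \<inter> C) \<union> (J2 - C)) = sum w (J1 \<inter> C) + sum w (J2 - C)"
    using assms by (intro sum.union_disjoint) auto
  moreover have "sum w ((J2 \<inter> C) \<union> (J1 - C)) = sum w (J2 \<inter> C) + sum w (J1 - C)"
    using assms by (intro sum.union_disjoint) auto
  moreover have "sum w J1 = sum w (J1 \<inter> C) + sum w (J1 - C)"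
    using assms(1) by (rule sum.Int_Diff)
  moreover have "sum w J2 = sum w (J2 \<inter> C) + sum w (J2 - C)"
    using assms(2) by (rule sum.Int_Diff)
  ultimately show ?thesis by (simp add: ac_simps)
qed

lemma even_set_exchange:
  assumes "simple_graph V E" "even_set V E S" "independent V E J1" "independent V E J2"
  obtains I1 I2 where "independent V E I1" "I1 \<inter> S = (J1 \<union> J2) \<inter> S"
    and "independent V E I2" "I2 \<inter> S = J1 \<inter> J2 \<inter> S"
    and "sum w I1 + sum w I2 = sum w J1 + sum w J2"
proof -
  obtain C where C: "C \<subseteq> sym_diff J1 J2" "J1 \<inter> S - J2 \<subseteq> C" "C \<inter> (J2 \<inter> S - J1) = {}"
    and closed: "\<And>u v. u \<in> C \<Longrightarrow> v \<in> sym_diff J1 J2 \<Longrightarrow> E u v \<Longrightarrow> v \<in> C"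
    using even_set_separating_set[OF assms(2-4)] by blast
  have "symp E" "finite V"
    using assms(1) by (auto simp: simple_graph_def symp_def)
  have "finite J1" "finite J2"
    using assms(3,4) \<open>finite V\<close> unfolding independent_def by (auto intro: finite_subset)
  show ?thesis
  proof (rule that)
    show "independent V E ((J1 \<inter> C) \<union> (J2 - C))"
      using independent_swap[OF \<open>symp E\<close> assms(3,4)] closed by blast
    show "independent V E ((J2 \<inter> C) \<union> (J1 - C))"
      using independent_swap[OF \<open>symp E\<close> assms(4,3)] closed by blast
    show "((J1 \<inter> C) \<union> (J2 - C)) \<inter> S = (J1 \<union> J2) \<inter> S"
      and "((J2 \<inter> C) \<union> (J1 - C)) \<inter> S = J1 \<inter> J2 \<inter> S"
      using C by blast+
    show "sum w ((J1 \<inter> C) \<union> (J2 - C)) + sum w ((J2 \<inter> C) \<union> (J1 - C)) = sum w J1 + sum w J2"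
      using \<open>finite J1\<close> \<open>finite J2\<close> by (rule sum_swap)
  qed
qed

theorem lemma2p2:
  fixes V :: "'a set" and E :: "'a \<Rightarrow> 'a \<Rightarrow> bool" and w :: "'a \<Rightarrow> real"
    and S :: "'a set" and f :: "'a set \<Rightarrow> real"
  assumes "simple_graph V E"
    and "\<forall>v\<in>V. 0 \<le> w v \<and> w v \<le> 1"
    and "even_set V E S"
    and "\<forall>A. A \<subseteq> S \<longrightarrow> f A = - alpha_AS V E w A S"
  shows "\<forall>A B. A \<subseteq> S \<and> B \<subseteq> S \<longrightarrow> f A + f B \<ge> f (A \<union> B) + f (A \<inter> B)"
proof (intro allI impI)
  fix A B assume AB: "A \<subseteq> S \<and> B \<subseteq> S"
  have "finite V" using assms(1) by (simp add: simple_graph_def)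
  have "independent V E S" using assms(1,3) by (rule even_set_independent)
  then have "independent V E A" "independent V E B"
    using AB independent_subset by blast+
  obtain JA where JA: "independent V E JA" "JA \<inter> S = A" "alpha_AS V E w A S = sum w JA"
    using alpha_AS_attained[OF \<open>finite V\<close> \<open>independent V E A\<close>] AB by (metis Int_absorb2)
  obtain JB where JB: "independent V E JB" "JB \<inter> S = B" "alpha_AS V E w B S = sum w JB"
    using alpha_AS_attained[OF \<open>finite V\<close> \<open>independent V E B\<close>] AB by (metis Int_absorb2)
  obtain I1 I2 where I1: "independent V E I1" "I1 \<inter> S = (JA \<union> JB) \<inter> S"
    and I2: "independent V E I2" "I2 \<inter> S = JA \<inter> JB \<inter> S"
    and swap: "sum w I1 + sum w I2 = sum w JA + sum w JB"
    by (rule even_set_exchange[OF assms(1,3) JA(1) JB(1)])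
  have "I1 \<inter> S = A \<union> B" "I2 \<inter> S = A \<inter> B"
    using I1(2) I2(2) JA(2) JB(2) by auto
  then have "sum w JA + sum w JB \<le> alpha_AS V E w (A \<union> B) S + alpha_AS V E w (A \<inter> B) S"
    using alpha_AS_ge[OF \<open>finite V\<close> I1(1)] alpha_AS_ge[OF \<open>finite V\<close> I2(1)] swap
    by (metis add_mono)
  moreover have "A \<union> B \<subseteq> S" "A \<inter> B \<subseteq> S"
    using AB by auto
  ultimately show "f A + f B \<ge> f (A \<union> B) + f (A \<inter> B)"
    using assms(4) AB JA(3) JB(3) by simp
qed

end
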